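(* Let $M$ be a metric structure. If for $j\in\mathbb{N}$ the definable predicates $\phi_j(x)=\phi_j(x_1,\dots,x_m)$ have the strong Erdős–Hajnal property and converge uniformly to $\phi(x)$, then $\phi(x)$ also has the strong Erdős–Hajnal property.
   Context: A $[0,1]$-valued definable predicate $\phi(x_1,\dots,x_m)$ on $M$ has the strong Erdős–Hajnal property if for every $\varepsilon>0$ there is $\delta>0$ such that for all finite $A_i\subseteq M^{x_i}$ ($1\le i\le m$) there are $B_i\subseteq A_i$ with $|B_i|\geq\delta|A_i|$ such that $(B_1,\dots,B_m)$ is $(\phi,\varepsilon)$-homogeneous, i.e. $|\phi(a)-\phi(a')|\leq\varepsilon$ for all $a,a'\in B_1\times\dots\times B_m$. *)

theory Defs
  imports "HOL-Analysis.Analysis"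
begin

text \<open>An m-ary predicate on M is modelled as a real-valued function on tuples
  a \<in> PiE {..<m} D, where D i is the carrier of the i-th variable block
  (the sort M^{x_i}).\<close>

definition phi_homogeneous ::
  "((nat \<Rightarrow> 'a) \<Rightarrow> real) \<Rightarrow> real \<Rightarrow> nat \<Rightarrow> (nat \<Rightarrow> 'a set) \<Rightarrow> bool" where
  "phi_homogeneous \<phi> \<epsilon> m B \<longleftrightarrow>
     (\<forall>a \<in> PiE {..<m} B. \<forall>a' \<in> PiE {..<m} B. \<bar>\<phi> a - \<phi> a'\<bar> \<le> \<epsilon>)"

definition strong_EH ::
  "((nat \<Rightarrow> 'a) \<Rightarrow> real) \<Rightarrow> nat \<Rightarrow> (nat \<Rightarrow> 'a set) \<Rightarrow> bool" where
  "strong_EH \<phi> m D \<longleftrightarrow>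
     (\<forall>\<epsilon>>0. \<exists>\<delta>>0. \<forall>A. (\<forall>i<m. finite (A i) \<and> A i \<subseteq> D i) \<longrightarrow>
        (\<exists>B. (\<forall>i<m. B i \<subseteq> A i \<and> real (card (B i)) \<ge> \<delta> * real (card (A i)))
             \<and> phi_homogeneous \<phi> \<epsilon> m B))"

end

theory Submission
  imports Defs
begin

text \<open>Homogeneity survives a uniform perturbation of size r at the cost of 2r in the
  tolerance. So if phi_j is within eps/3 of phi everywhere, the sets B witnessing the strong
  Erdos-Hajnal property of phi_j for eps/3 witness it for phi and eps, with the same delta.\<close>

lemma phi_homogeneous_perturb:
  assumes hom: "phi_homogeneous \<psi> \<epsilon> m B"
    and close: "\<And>a. a \<in> PiE {..<m} B \<Longrightarrow> \<bar>\<psi> a - \<phi> a\<bar> \<le> r"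
  shows "phi_homogeneous \<phi> (\<epsilon> + 2 * r) m B"
  unfolding phi_homogeneous_def
proof (intro ballI)
  fix a a' assume a: "a \<in> PiE {..<m} B" and a': "a' \<in> PiE {..<m} B"
  have "\<bar>\<psi> a - \<psi> a'\<bar> \<le> \<epsilon>"
    using hom a a' unfolding phi_homogeneous_def by blast
  with close[OF a] close[OF a'] show "\<bar>\<phi> a - \<phi> a'\<bar> \<le> \<epsilon> + 2 * r"
    by linarith
qed

lemma strong_EH_approx:
  assumes approx: "\<And>r. r > 0 \<Longrightarrow>
      \<exists>\<psi>. strong_EH \<psi> m D \<and> (\<forall>a \<in> PiE {..<m} D. \<bar>\<psi> a - \<phi> a\<bar> \<le> r)"
  shows "strong_EH \<phi> m D"
  unfolding strong_EH_def
proof (intro allI impI)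
  fix \<epsilon> :: real assume "\<epsilon> > 0"
  then obtain \<psi> where sEH: "strong_EH \<psi> m D"
    and close: "\<And>a. a \<in> PiE {..<m} D \<Longrightarrow> \<bar>\<psi> a - \<phi> a\<bar> \<le> \<epsilon> / 3"
    using approx[of "\<epsilon> / 3"] by auto
  obtain \<delta> where "\<delta> > 0" and \<delta>: "\<And>A. \<forall>i<m. finite (A i) \<and> A i \<subseteq> D i \<Longrightarrow>
      \<exists>B. (\<forall>i<m. B i \<subseteq> A i \<and> real (card (B i)) \<ge> \<delta> * real (card (A i)))
        \<and> phi_homogeneous \<psi> (\<epsilon> / 3) m B"
    using sEH \<open>\<epsilon> > 0\<close> unfolding strong_EH_def by (metis zero_less_divide_iff zero_less_numeral)
  show "\<exists>\<delta>>0. \<forall>A. (\<forall>i<m. finite (A i) \<and> A i \<subseteq> D i) \<longrightarrow>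
      (\<exists>B. (\<forall>i<m. B i \<subseteq> A i \<and> real (card (B i)) \<ge> \<delta> * real (card (A i)))
        \<and> phi_homogeneous \<phi> \<epsilon> m B)"
  proof (intro exI[of _ \<delta>] conjI allI impI \<open>\<delta> > 0\<close>)
    fix A assume A: "\<forall>i<m. finite (A i) \<and> A i \<subseteq> D i"
    then obtain B where B: "\<forall>i<m. B i \<subseteq> A i \<and> real (card (B i)) \<ge> \<delta> * real (card (A i))"
      and hom: "phi_homogeneous \<psi> (\<epsilon> / 3) m B"
      using \<delta> by blast
    have "PiE {..<m} B \<subseteq> PiE {..<m} D"
      using A B by (intro PiE_mono) blast
    then have "phi_homogeneous \<phi> (\<epsilon> / 3 + 2 * (\<epsilon> / 3)) m B"
      using close by (intro phi_homogeneous_perturb[OF hom]) blast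
    then have "phi_homogeneous \<phi> \<epsilon> m B"
      by simp
    then show "\<exists>B. (\<forall>i<m. B i \<subseteq> A i \<and> real (card (B i)) \<ge> \<delta> * real (card (A i)))
        \<and> phi_homogeneous \<phi> \<epsilon> m B"
      using B by blast
  qed
qed

theorem mainTheorem11:
  fixes \<phi>s :: "nat \<Rightarrow> (nat \<Rightarrow> 'a) \<Rightarrow> real"
    and \<phi> :: "(nat \<Rightarrow> 'a) \<Rightarrow> real"
    and m :: nat
    and D :: "nat \<Rightarrow> 'a set"
  assumes range01: "\<And>j a. a \<in> PiE {..<m} D \<Longrightarrow> \<phi>s j a \<in> {0..1}"
    and sEH: "\<And>j. strong_EH (\<phi>s j) m D"
    and unif: "uniform_limit (PiE {..<m} D) \<phi>s \<phi> sequentially"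
  shows "strong_EH \<phi> m D"
proof (rule strong_EH_approx)
  fix r :: real assume "r > 0"
  then have "\<forall>\<^sub>F j in sequentially. \<forall>a \<in> PiE {..<m} D. dist (\<phi>s j a) (\<phi> a) < r"
    using unif unfolding uniform_limit_iff by blast
  then obtain j where "\<forall>a \<in> PiE {..<m} D. \<bar>\<phi>s j a - \<phi> a\<bar> < r"
    unfolding eventually_sequentially dist_real_def by blast
  then show "\<exists>\<psi>. strong_EH \<psi> m D \<and> (\<forall>a \<in> PiE {..<m} D. \<bar>\<psi> a - \<phi> a\<bar> \<le> r)"
    using sEH by (meson less_imp_le)
qed

end
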